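(* Let $\Xi\subseteq L^0(\mathbb{R}^d,\mathcal{F})$ be infinitely $\mathcal{F}$-decomposable, and let $\Gamma$ be an $\mathcal{F}$-measurable random set such that $\Gamma(\omega)$ is open and non-empty for almost all $\omega$. Then $$L^0(\Gamma,\mathcal{F})+\Xi=L^0(\Gamma,\mathcal{F})+\mathrm{cl}_0\,\Xi,$$ where the sums are elementwise (Minkowski) sums of families of random vectors.
   Context: $(\Omega,\mathcal{F},\mathbb{P})$ is a complete probability space. A map $\Gamma$ from $\Omega$ to subsets of $\mathbb{R}^d$ is an $\mathcal{F}$-measurable random set if its graph $\{(\omega,x):x\in\Gamma(\omega)\}$ belongs to $\mathcal{F}\otimes\mathcal{B}(\mathbb{R}^d)$. $L^0(\Gamma,\mathcal{F})$ is the family of $\mathcal{F}$-measurable random vectors $\xi$ with $\xi\in\Gamma$ a.s. (selections); $L^0(\mathbb{R}^d,\mathcal{F})$ is the family of all $\mathcal{F}$-measurable random vectors, identified up to a.s. equality. $\mathrm{cl}_0$ denotes closure with respect to convergence in probability. A family $\Xi\subseteq L^0(\mathbb{R}^d,\mathcal{F})$ is infinitely $\mathcal{F}$-decomposable if $\sum_n \xi_n\mathbf{1}_{A_n}\in\Xi$ for every sequence $(\xi_n)_{n\ge1}$ in $\Xi$ and every countable $\mathcal{F}$-measurable partition $(A_n)_{n\ge1}$ of $\Omega$. *)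

theory Defs
  imports "HOL-Probability.Probability"
begin

text \<open>Convention: a family represents the set of
a.s.-equivalence classes of its members.\<close>

definition L0 :: "'b measure \<Rightarrow> ('b \<Rightarrow> 'a::euclidean_space) set" where
  "L0 M = borel_measurable M"

definition random_set :: "'b measure \<Rightarrow> ('b \<Rightarrow> 'a::euclidean_space set) \<Rightarrow> bool" where
  "random_set M \<Gamma> \<longleftrightarrow> {(\<omega>, x). \<omega> \<in> space M \<and> x \<in> \<Gamma> \<omega>} \<in> sets (M \<Otimes>\<^sub>M borel)"

definition L0_sel :: "'b measure \<Rightarrow> ('b \<Rightarrow> 'a::euclidean_space set) \<Rightarrow> ('b \<Rightarrow> 'a) set" where
  "L0_sel M \<Gamma> = {\<xi> \<in> borel_measurable M. AE \<omega> in M. \<xi> \<omega> \<in> \<Gamma> \<omega>}"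

definition conv_in_prob :: "'b measure \<Rightarrow> (nat \<Rightarrow> 'b \<Rightarrow> 'a::euclidean_space) \<Rightarrow> ('b \<Rightarrow> 'a) \<Rightarrow> bool" where
  "conv_in_prob M X Y \<longleftrightarrow>
     (\<forall>\<epsilon>>0. (\<lambda>n. measure M {\<omega> \<in> space M. dist (X n \<omega>) (Y \<omega>) > \<epsilon>}) \<longlonglongrightarrow> 0)"

definition cl0 :: "'b measure \<Rightarrow> ('b \<Rightarrow> 'a::euclidean_space) set \<Rightarrow> ('b \<Rightarrow> 'a) set" where
  "cl0 M \<Xi> = {\<xi> \<in> borel_measurable M. \<exists>X. (\<forall>n. X n \<in> \<Xi>) \<and> conv_in_prob M X \<xi>}"

text \<open>Infinite decomposability (membership of the glued vector up to a.s. equality,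
 since elements of L0 are equivalence classes).\<close>
definition inf_decomposable :: "'b measure \<Rightarrow> ('b \<Rightarrow> 'a::euclidean_space) set \<Rightarrow> bool" where
  "inf_decomposable M \<Xi> \<longleftrightarrow>
     (\<forall>\<xi> A. (\<forall>n. \<xi> n \<in> \<Xi>) \<and> (\<forall>n. A n \<in> sets M) \<and> disjoint_family A \<and> (\<Union>n. A n) = space M
        \<longrightarrow> (\<exists>\<eta>\<in>\<Xi>. AE \<omega> in M. \<eta> \<omega> = (\<Sum>n. indicator (A n) \<omega> *\<^sub>R \<xi> n \<omega>)))"

definition msum :: "('b \<Rightarrow> 'a::euclidean_space) set \<Rightarrow> ('b \<Rightarrow> 'a) set \<Rightarrow> ('b \<Rightarrow> 'a) set" where
  "msum A B = {(\<lambda>\<omega>. f \<omega> + g \<omega>) | f g. f \<in> A \<and> g \<in> B}"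

end

theory Submission
  imports Defs
begin

text \<open>If \<open>\<zeta> = lim X\<^sub>n\<close> in probability with \<open>X\<^sub>n \<in> \<Xi>\<close>, then almost surely \<open>X\<^sub>n(\<omega>)\<close> comes
arbitrarily close to \<open>\<zeta>(\<omega>)\<close>. Given a selection \<open>\<gamma>\<close> of the open set \<open>\<Gamma>\<close>, the point
\<open>\<gamma> + \<zeta> - X\<^sub>n\<close> therefore lies in \<open>\<Gamma>\<close> for some \<open>n\<close>, almost surely. Gluing the \<open>X\<^sub>n\<close> along the
events where this first happens yields, by decomposability, an \<open>\<eta> \<in> \<Xi>\<close> with
\<open>\<gamma> + \<zeta> - \<eta>\<close> a selection of \<open>\<Gamma>\<close>, so \<open>\<gamma> + \<zeta> = (\<gamma> + \<zeta> - \<eta>) + \<eta>\<close>.\<close>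

lemma msum_memI: "f \<in> A \<Longrightarrow> g \<in> B \<Longrightarrow> (\<lambda>\<omega>. f \<omega> + g \<omega>) \<in> msum A B"
  unfolding msum_def by blast

lemma msum_mono: "B \<subseteq> C \<Longrightarrow> msum A B \<subseteq> msum A C"
  unfolding msum_def by blast

lemma suminf_indicator_scaleR_disjoint_family:
  fixes f :: "nat \<Rightarrow> 'a::real_normed_vector"
  assumes "disjoint_family A" and "x \<in> A i"
  shows "(\<Sum>n. indicator (A n) x *\<^sub>R f n) = f i"
proof -
  have "(\<lambda>n. indicator (A n) x *\<^sub>R f n) = (\<lambda>n. if n = i then f n else 0)"
    using assms by (fastforce simp: disjoint_family_on_def indicator_def)
  then show ?thesis
    using sums_unique[OF sums_single[of i f]] by simp
qed

lemma inf_decomposable_glue_AE_cover: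
  fixes B :: "nat \<Rightarrow> 'b set"
  assumes dec: "inf_decomposable M \<Xi>"
    and X: "\<And>n. X n \<in> \<Xi>" and B: "\<And>n. B n \<in> sets M"
    and cover: "AE \<omega> in M. \<omega> \<in> (\<Union>n. B n)"
  shows "\<exists>\<eta>\<in>\<Xi>. AE \<omega> in M. \<exists>n. \<omega> \<in> B n \<and> \<eta> \<omega> = X n \<omega>"
proof -
  \<comment> \<open>Put the null set not covered by the \<open>B n\<close> in front, then make the family disjoint.\<close>
  define B' where "B' = case_nat (space M - (\<Union>n. B n)) B"
  define X' where "X' = case_nat (X 0) X"
  define A where "A = disjointed B'"
  have "range B' \<subseteq> sets M"
    using B by (auto simp: B'_def split: nat.split)
  then have A_sets: "\<forall>n. A n \<in> sets M"
    unfolding A_def using sets.range_disjointed_sets by blast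
  have A_disj: "disjoint_family A"
    unfolding A_def by (rule disjoint_family_disjointed)
  have "(\<Union>n. B' n) = space M"
  proof (intro equalityI subsetI)
    fix \<omega> assume "\<omega> \<in> (\<Union>n. B' n)"
    then obtain n where "\<omega> \<in> B' n" by blast
    then show "\<omega> \<in> space M"
      using B sets.sets_into_space by (cases n) (auto simp: B'_def)
  next
    fix \<omega> assume "\<omega> \<in> space M"
    then have "\<omega> \<in> B' 0 \<or> (\<exists>n. \<omega> \<in> B' (Suc n))"
      by (auto simp: B'_def)
    then show "\<omega> \<in> (\<Union>n. B' n)" by blast
  qed
  then have A_cover: "(\<Union>n. A n) = space M"
    unfolding A_def UN_disjointed_eq .
  have "\<forall>n. X' n \<in> \<Xi>"
    using X by (simp add: X'_def split: nat.split)
  with dec A_sets A_disj A_cover obtain \<eta> where "\<eta> \<in> \<Xi>"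
    and \<eta>: "AE \<omega> in M. \<eta> \<omega> = (\<Sum>n. indicator (A n) \<omega> *\<^sub>R X' n \<omega>)"
    unfolding inf_decomposable_def by blast
  moreover have "AE \<omega> in M. \<exists>n. \<omega> \<in> B n \<and> \<eta> \<omega> = X n \<omega>"
    using cover \<eta>
  proof eventually_elim
    case (elim \<omega>)
    then obtain m where m: "\<omega> \<in> A m"
      using A_cover B sets.sets_into_space by blast
    have "m \<noteq> 0"
      using m elim(1) by (cases m) (auto simp: A_def B'_def)
    then obtain n where n: "m = Suc n"
      using not0_implies_Suc by blast
    have "\<omega> \<in> B n"
      using m disjointed_subset[of B' m] by (auto simp: A_def B'_def n)
    moreover have "\<eta> \<omega> = X n \<omega>"
      using elim(2) suminf_indicator_scaleR_disjoint_family[OF A_disj m, of "\<lambda>k. X' k \<omega>"]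
      by (simp add: X'_def n)
    ultimately show ?case by blast
  qed
  ultimately show ?thesis by blast
qed

lemma random_set_membership_sets:
  assumes "random_set M \<Gamma>" and "f \<in> borel_measurable M"
  shows "{\<omega> \<in> space M. f \<omega> \<in> \<Gamma> \<omega>} \<in> sets M"
proof -
  have "(\<lambda>\<omega>. (\<omega>, f \<omega>)) \<in> M \<rightarrow>\<^sub>M M \<Otimes>\<^sub>M borel"
    using assms(2) by measurable
  from measurable_sets[OF this assms(1)[unfolded random_set_def]]
  show ?thesis
    by (rule back_subst) auto
qed

lemma subset_cl0:
  assumes "\<Xi> \<subseteq> L0 M"
  shows "\<Xi> \<subseteq> cl0 M \<Xi>"
proof
  fix \<xi> assume "\<xi> \<in> \<Xi>"
  with assms show "\<xi> \<in> cl0 M \<Xi>"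
    unfolding cl0_def conv_in_prob_def L0_def
    by (intro CollectI conjI exI[of _ "\<lambda>_. \<xi>"]) auto
qed

lemma (in finite_measure) conv_in_prob_AE_dist_arbitrarily_small:
  assumes conv: "conv_in_prob M X Y"
    and X: "\<And>n. X n \<in> borel_measurable M" and Y: "Y \<in> borel_measurable M"
  shows "AE \<omega> in M. \<forall>e>0. \<exists>n. dist (X n \<omega>) (Y \<omega>) < e"
proof -
  have AE_close: "AE \<omega> in M. \<exists>n. dist (X n \<omega>) (Y \<omega>) \<le> e" if "e > 0" for e :: real
  proof -
    define T where "T n = {\<omega> \<in> space M. e < dist (X n \<omega>) (Y \<omega>)}" for n
    define S where "S = {\<omega> \<in> space M. \<forall>n. e < dist (X n \<omega>) (Y \<omega>)}"
    have S_sets: "S \<in> sets M" and T_sets: "T n \<in> sets M" for n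
      unfolding S_def T_def using X Y by measurable
    have "measure M S \<le> measure M (T n)" for n
      using T_sets by (intro finite_measure_mono) (auto simp: S_def T_def)
    moreover have "(\<lambda>n. measure M (T n)) \<longlonglongrightarrow> 0"
      using conv \<open>e > 0\<close> unfolding conv_in_prob_def T_def by blast
    ultimately have "measure M S \<le> 0"
      by (intro LIMSEQ_le_const) auto
    then have "emeasure M S = 0"
      by (simp add: emeasure_eq_measure measure_le_0_iff)
    moreover have "{\<omega> \<in> space M. \<not> (\<exists>n. dist (X n \<omega>) (Y \<omega>) \<le> e)} = S"
      by (simp add: S_def not_le)
    ultimately show ?thesis
      by (simp add: AE_iff_measurable[OF S_sets])
  qed
  have "AE \<omega> in M. \<forall>k::nat. \<exists>n. dist (X n \<omega>) (Y \<omega>) \<le> 1 / Suc k"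
    using AE_close by (simp add: AE_all_countable)
  then show ?thesis
  proof eventually_elim
    case (elim \<omega>)
    show ?case
    proof (intro allI impI)
      fix e :: real assume "e > 0"
      then obtain k :: nat where "1 / Suc k < e"
        using nat_approx_posE by blast
      with elim show "\<exists>n. dist (X n \<omega>) (Y \<omega>) < e"
        by (meson le_less_trans)
    qed
  qed
qed

lemma (in finite_measure) cl0_absorbed_by_L0_sel:
  assumes Xi: "\<Xi> \<subseteq> L0 M" and dec: "inf_decomposable M \<Xi>"
    and \<Gamma>: "random_set M \<Gamma>" and \<Gamma>_open: "AE \<omega> in M. open (\<Gamma> \<omega>)"
    and \<gamma>: "\<gamma> \<in> L0_sel M \<Gamma>" and \<zeta>: "\<zeta> \<in> cl0 M \<Xi>"
  shows "\<exists>\<eta>\<in>\<Xi>. (\<lambda>\<omega>. \<gamma> \<omega> + \<zeta> \<omega> - \<eta> \<omega>) \<in> L0_sel M \<Gamma>"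
proof -
  have \<gamma>_meas: "\<gamma> \<in> borel_measurable M" and \<gamma>_sel: "AE \<omega> in M. \<gamma> \<omega> \<in> \<Gamma> \<omega>"
    using \<gamma> unfolding L0_sel_def by auto
  obtain X where X: "\<And>n. X n \<in> \<Xi>" and \<zeta>_meas: "\<zeta> \<in> borel_measurable M"
    and conv: "conv_in_prob M X \<zeta>"
    using \<zeta> unfolding cl0_def by auto
  have Xi_meas: "\<eta> \<in> borel_measurable M" if "\<eta> \<in> \<Xi>" for \<eta>
    using Xi that unfolding L0_def by auto
  define B where "B n = {\<omega> \<in> space M. \<gamma> \<omega> + \<zeta> \<omega> - X n \<omega> \<in> \<Gamma> \<omega>}" for n
  have B_sets: "B n \<in> sets M" for n
    unfolding B_def using \<Gamma> \<gamma>_meas \<zeta>_meas Xi_meas[OF X]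
    by (intro random_set_membership_sets) measurable
  have covered: "AE \<omega> in M. \<omega> \<in> (\<Union>n. B n)"
    using conv_in_prob_AE_dist_arbitrarily_small[OF conv Xi_meas[OF X] \<zeta>_meas]
      \<gamma>_sel \<Gamma>_open AE_space
  proof eventually_elim
    case (elim \<omega>)
    then obtain r where "r > 0" and r: "ball (\<gamma> \<omega>) r \<subseteq> \<Gamma> \<omega>"
      using open_contains_ball by blast
    with elim obtain n where "dist (X n \<omega>) (\<zeta> \<omega>) < r"
      by blast
    moreover have "dist (\<gamma> \<omega>) (\<gamma> \<omega> + \<zeta> \<omega> - X n \<omega>) = dist (X n \<omega>) (\<zeta> \<omega>)"
      by (simp add: dist_norm algebra_simps)
    ultimately have "\<gamma> \<omega> + \<zeta> \<omega> - X n \<omega> \<in> \<Gamma> \<omega>"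
      using r by auto
    then show ?case
      using elim by (auto simp: B_def)
  qed
  from inf_decomposable_glue_AE_cover[OF dec X B_sets covered]
  obtain \<eta> where "\<eta> \<in> \<Xi>"
    and \<eta>: "AE \<omega> in M. \<exists>n. \<omega> \<in> B n \<and> \<eta> \<omega> = X n \<omega>" ..
  have "(\<lambda>\<omega>. \<gamma> \<omega> + \<zeta> \<omega> - \<eta> \<omega>) \<in> borel_measurable M"
    using \<gamma>_meas \<zeta>_meas Xi_meas[OF \<open>\<eta> \<in> \<Xi>\<close>] by measurable
  moreover have "AE \<omega> in M. \<gamma> \<omega> + \<zeta> \<omega> - \<eta> \<omega> \<in> \<Gamma> \<omega>"
    using \<eta> by eventually_elim (auto simp: B_def)
  ultimately have "(\<lambda>\<omega>. \<gamma> \<omega> + \<zeta> \<omega> - \<eta> \<omega>) \<in> L0_sel M \<Gamma>"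
    unfolding L0_sel_def by blast
  with \<open>\<eta> \<in> \<Xi>\<close> show ?thesis by blast
qed

lemma (in finite_measure) msum_L0_sel_cl0_subset:
  assumes "\<Xi> \<subseteq> L0 M" and "inf_decomposable M \<Xi>"
    and "random_set M \<Gamma>" and "AE \<omega> in M. open (\<Gamma> \<omega>)"
  shows "msum (L0_sel M \<Gamma>) (cl0 M \<Xi>) \<subseteq> msum (L0_sel M \<Gamma>) \<Xi>"
proof
  fix u assume "u \<in> msum (L0_sel M \<Gamma>) (cl0 M \<Xi>)"
  then obtain \<gamma> \<zeta> where u: "u = (\<lambda>\<omega>. \<gamma> \<omega> + \<zeta> \<omega>)"
    and "\<gamma> \<in> L0_sel M \<Gamma>" and "\<zeta> \<in> cl0 M \<Xi>"
    unfolding msum_def by blast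
  then obtain \<eta> where "\<eta> \<in> \<Xi>" and "(\<lambda>\<omega>. \<gamma> \<omega> + \<zeta> \<omega> - \<eta> \<omega>) \<in> L0_sel M \<Gamma>"
    using cl0_absorbed_by_L0_sel[OF assms] by blast
  then have "(\<lambda>\<omega>. (\<gamma> \<omega> + \<zeta> \<omega> - \<eta> \<omega>) + \<eta> \<omega>) \<in> msum (L0_sel M \<Gamma>) \<Xi>"
    by (intro msum_memI)
  then show "u \<in> msum (L0_sel M \<Gamma>) \<Xi>"
    by (simp add: u)
qed

theorem proposition2p3:
  fixes M :: "'b measure" and \<Xi> :: "('b \<Rightarrow> 'a::euclidean_space) set"
    and \<Gamma> :: "'b \<Rightarrow> 'a set"
  assumes "prob_space M" and "complete_measure M"
    and "\<Xi> \<subseteq> L0 M"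
    and "inf_decomposable M \<Xi>"
    and "random_set M \<Gamma>"
    and "AE \<omega> in M. open (\<Gamma> \<omega>) \<and> \<Gamma> \<omega> \<noteq> {}"
  shows "msum (L0_sel M \<Gamma>) \<Xi> = msum (L0_sel M \<Gamma>) (cl0 M \<Xi>)"
proof (rule subset_antisym)
  interpret prob_space M by fact
  show "msum (L0_sel M \<Gamma>) \<Xi> \<subseteq> msum (L0_sel M \<Gamma>) (cl0 M \<Xi>)"
    using subset_cl0[OF assms(3)] by (rule msum_mono)
  have "AE \<omega> in M. open (\<Gamma> \<omega>)"
    using assms(6) by auto
  then show "msum (L0_sel M \<Gamma>) (cl0 M \<Xi>) \<subseteq> msum (L0_sel M \<Gamma>) \<Xi>"
    by (rule msum_L0_sel_cl0_subset[OF assms(3,4,5)])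
qed

end
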